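(* For all $n \geq 2$ and $1 \leq i \leq n$, $$a_{n,i}(p,q)=p^iq\sum_{j=i}^{n-1}a_{n-1,j}(p,q)+p^iq\sum_{j=1}^{i-1}q^{i-j}a_{n-1,j}(p,q),$$ and $a_{1,1}(p,q)=pq^2$.
   Context: An inversion sequence of length $n$ is a sequence $\rho=\rho_1\cdots\rho_n$ of integers with $1\le \rho_i\le i$ for all $1\le i\le n$. Let $I_n$ be the set of inversion sequences of length $n$ and $I_{n,i}$ the subset of those with last letter $\rho_n=i$. Each $\rho$ is represented as a bargraph whose $i$-th column consists of $\rho_i$ unit cells standing on the $x$-axis. The area of $\rho$ is $\mathrm{area}(\rho)=\rho_1+\cdots+\rho_n$, and the semi-perimeter $\mathrm{sper}(\rho)$ is half the perimeter of the bargraph (the bottom boundary on the $x$-axis included); equivalently $\mathrm{sper}(\rho)=n+\rho_1+\sum_{i=1}^{n-1}\max(\rho_{i+1}-\rho_i,0)$. Define $a_{n,i}(p,q)=\sum_{\rho\in I_{n,i}}p^{\mathrm{area}(\rho)}q^{\mathrm{sper}(\rho)}$. *)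

theory Defs
  imports Main
begin

text \<open>Inversion sequences of length n, as lists rho = [rho_1, ..., rho_n]
  (list index k corresponds to position k+1), with 1 <= rho_i <= i.\<close>
definition inv_seqs :: "nat \<Rightarrow> nat list set" where
  "inv_seqs n = {xs. length xs = n \<and> (\<forall>k<n. 1 \<le> xs ! k \<and> xs ! k \<le> k + 1)}"

definition inv_seqs_last :: "nat \<Rightarrow> nat \<Rightarrow> nat list set" where
  "inv_seqs_last n i = {xs \<in> inv_seqs n. xs \<noteq> [] \<and> last xs = i}"

definition area :: "nat list \<Rightarrow> nat" where
  "area xs = sum_list xs"

text \<open>Semi-perimeter: n + rho_1 + sum_{i=1}^{n-1} max(rho_{i+1} - rho_i, 0)
  (natural-number subtraction truncates at 0, giving the max).\<close>
definition sper :: "nat list \<Rightarrow> nat" where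
  "sper xs = length xs + (if xs = [] then 0 else hd xs)
     + (\<Sum>k<length xs - 1. xs ! (k + 1) - xs ! k)"

definition a_gf :: "nat \<Rightarrow> nat \<Rightarrow> 'a :: comm_semiring_1 \<Rightarrow> 'a \<Rightarrow> 'a" where
  "a_gf n i p q = (\<Sum>xs\<in>inv_seqs_last n i. p ^ area xs * q ^ sper xs)"

end

theory Submission
  imports Defs
begin

text \<open>Deleting the last letter maps I_{n,i} bijectively onto I_{n-1} whenever
  1 <= i <= n. Appending i to a sequence with last letter j adds i to the area and
  1 + max(i - j, 0) to the semi-perimeter, so it multiplies the weight by p^i q if j >= i
  and by p^i q^{1+i-j} if j < i. Grouping I_{n-1} by last letter gives the recursion.\<close>

lemma area_snoc: "area (ys @ [i]) = area ys + i"
  by (simp add: area_def)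

lemma sper_snoc:
  assumes "ys \<noteq> []"
  shows "sper (ys @ [i]) = sper ys + 1 + (i - last ys)"
proof -
  obtain m where m: "length ys = Suc m" using assms by (cases ys) auto
  have "(\<Sum>k<length (ys @ [i]) - 1. (ys @ [i]) ! (k + 1) - (ys @ [i]) ! k)
      = (\<Sum>k<m. (ys @ [i]) ! (k + 1) - (ys @ [i]) ! k) + ((ys @ [i]) ! Suc m - (ys @ [i]) ! m)"
    using m by simp
  also have "(\<Sum>k<m. (ys @ [i]) ! (k + 1) - (ys @ [i]) ! k) = (\<Sum>k<m. ys ! (k + 1) - ys ! k)"
    by (rule sum.cong) (auto simp: nth_append m)
  also have "(ys @ [i]) ! Suc m - (ys @ [i]) ! m = i - last ys"
    using m assms by (simp add: nth_append last_conv_nth)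
  finally show ?thesis using assms m unfolding sper_def by simp
qed

lemma finite_inv_seqs: "finite (inv_seqs n)"
proof (rule finite_subset)
  show "inv_seqs n \<subseteq> {xs. set xs \<subseteq> {0..n} \<and> length xs = n}"
    by (auto simp: inv_seqs_def in_set_conv_nth) (metis Suc_leI le_trans less_Suc_eq_le)
  show "finite {xs. set xs \<subseteq> {0..n} \<and> length xs = n}"
    by (rule finite_lists_length_eq) simp
qed

lemma snoc_in_inv_seqs_iff:
  "ys @ [i] \<in> inv_seqs (Suc m) \<longleftrightarrow> ys \<in> inv_seqs m \<and> 1 \<le> i \<and> i \<le> Suc m"
  by (auto simp: inv_seqs_def All_less_Suc nth_append)

lemma inv_seqs_last_Suc:
  assumes "1 \<le> i" "i \<le> Suc m"
  shows "inv_seqs_last (Suc m) i = (\<lambda>ys. ys @ [i]) ` inv_seqs m"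
proof (intro equalityI subsetI)
  fix xs assume xs: "xs \<in> inv_seqs_last (Suc m) i"
  then have "xs = butlast xs @ [i]"
    using append_butlast_last_id[of xs] by (simp add: inv_seqs_last_def)
  moreover have "butlast xs \<in> inv_seqs m"
    using xs snoc_in_inv_seqs_iff[of "butlast xs" i m] \<open>xs = butlast xs @ [i]\<close>
    by (simp add: inv_seqs_last_def)
  ultimately show "xs \<in> (\<lambda>ys. ys @ [i]) ` inv_seqs m" by blast
next
  fix xs assume "xs \<in> (\<lambda>ys. ys @ [i]) ` inv_seqs m"
  then show "xs \<in> inv_seqs_last (Suc m) i"
    using assms snoc_in_inv_seqs_iff by (auto simp: inv_seqs_last_def)
qed

lemma inv_seqs_eq_UN_last:
  assumes "1 \<le> m"
  shows "inv_seqs m = (\<Union>j\<in>{1..m}. inv_seqs_last m j)"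
proof (intro equalityI subsetI)
  fix xs assume xs: "xs \<in> inv_seqs m"
  then have len: "length xs = m" by (simp add: inv_seqs_def)
  then have ne: "xs \<noteq> []"
    using assms by auto
  then have "last xs = xs ! (m - 1)"
    using len by (simp add: last_conv_nth)
  moreover have "1 \<le> xs ! (m - 1) \<and> xs ! (m - 1) \<le> m"
    using xs assms by (auto simp: inv_seqs_def dest: spec[of _ "m - 1"])
  ultimately show "xs \<in> (\<Union>j\<in>{1..m}. inv_seqs_last m j)"
    using xs ne by (auto simp: inv_seqs_last_def)
qed (auto simp: inv_seqs_last_def)

lemma a_gf_Suc:
  fixes p q :: "'a :: comm_semiring_1"
  assumes "1 \<le> m" "1 \<le> i" "i \<le> Suc m"
  shows "a_gf (Suc m) i p q = (\<Sum>j = 1..m. p ^ i * q * q ^ (i - j) * a_gf m j p q)"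
proof -
  let ?w = "\<lambda>xs. p ^ area xs * q ^ sper xs"
  have "a_gf (Suc m) i p q = (\<Sum>ys\<in>inv_seqs m. ?w (ys @ [i]))"
    unfolding a_gf_def inv_seqs_last_Suc[OF assms(2,3)]
    by (rule sum.reindex_cong[where l = "\<lambda>ys. ys @ [i]"]) (auto simp: inj_on_def)
  also have "\<dots> = (\<Sum>j = 1..m. \<Sum>ys\<in>inv_seqs_last m j. ?w (ys @ [i]))"
    unfolding inv_seqs_eq_UN_last[OF assms(1)]
    by (rule sum.UNION_disjoint) (auto simp: finite_inv_seqs inv_seqs_last_def)
  also have "\<dots> = (\<Sum>j = 1..m. \<Sum>ys\<in>inv_seqs_last m j. p ^ i * q * q ^ (i - j) * ?w ys)"
    by (intro sum.cong refl)
      (auto simp: inv_seqs_last_def sper_snoc area_snoc power_add mult_ac)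
  finally show ?thesis
    by (simp add: a_gf_def sum_distrib_left)
qed

lemma a_gf_1_1: "a_gf 1 1 p q = p * q ^ 2"
proof -
  have "inv_seqs_last 1 1 = {[1]}"
    by (auto simp: inv_seqs_last_def inv_seqs_def length_Suc_conv)
  then show ?thesis by (simp add: a_gf_def area_def sper_def numeral_2_eq_2)
qed

theorem lemma2p1:
  fixes p q :: "'a :: comm_semiring_1"
  shows "(\<forall>n i. 2 \<le> n \<longrightarrow> 1 \<le> i \<longrightarrow> i \<le> n \<longrightarrow>
            a_gf n i p q =
              p ^ i * q * (\<Sum>j = i..n - 1. a_gf (n - 1) j p q)
            + p ^ i * q * (\<Sum>j = 1..i - 1. q ^ (i - j) * a_gf (n - 1) j p q))
         \<and> a_gf 1 1 p q = p * q ^ 2"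
proof (intro conjI allI impI a_gf_1_1)
  fix n i :: nat assume n: "2 \<le> n" and i: "1 \<le> i" "i \<le> n"
  obtain m where nm: "n = Suc m" and m: "1 \<le> m" using n by (cases n) auto
  let ?t = "\<lambda>j. p ^ i * q * q ^ (i - j) * a_gf m j p q"
  have "{1..m} = {1..i - 1} \<union> {i..m}" using i nm by auto
  then have "a_gf n i p q = (\<Sum>j = 1..i - 1. ?t j) + (\<Sum>j = i..m. ?t j)"
    using a_gf_Suc[OF m, of i p q] i nm by (simp add: sum.union_disjoint)
  also have "(\<Sum>j = i..m. ?t j) = (\<Sum>j = i..m. p ^ i * q * a_gf m j p q)"
    by (rule sum.cong) auto
  finally show "a_gf n i p q =
              p ^ i * q * (\<Sum>j = i..n - 1. a_gf (n - 1) j p q)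
            + p ^ i * q * (\<Sum>j = 1..i - 1. q ^ (i - j) * a_gf (n - 1) j p q)"
    using nm by (simp add: sum_distrib_left mult_ac add_ac)
qed

end
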